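(* In the Cucker–Smale setting below, for all $i,j=1,\dots,N$, every unit vector $v\in\mathbb{R}^d$ and every $n\in\mathbb{N}_0$, $$\langle v_i(t)-v_j(t),v\rangle\le e^{-\tilde K(t-\bar t)}\langle v_i(\bar t)-v_j(\bar t),v\rangle+\big(1-e^{-\tilde K(t-\bar t)}\big)d_V(t_{2n})$$ for all $t_{2n+1}>t\ge\bar t\ge t_{2n}$.
   Context: Setting: $N\ge2$; $\tilde\psi:\mathbb{R}\to\mathbb{R}$ positive, bounded, continuous, with $\tilde K:=\|\tilde\psi\|_\infty$ and $\int_0^\infty\min_{r\in[0,x]}\tilde\psi(r)dx=+\infty$; $\{t_n\}_{n\in\mathbb{N}_0}$ increasing, nonnegative, $t_0=0$, $t_n\to\infty$, with $t_{2n+2}-t_{2n+1}<\frac{\ln2}{\tilde K}$ and $t_{2n+1}-t_{2n}>\frac1{\tilde K}$ for all $n$, and $\sum_{p\ge0}\ln\frac{e^{\tilde K(t_{2p+2}-t_{2p+1})}}{2-e^{\tilde K(t_{2p+2}-t_{2p+1})}}<\infty$. $\alpha(0)=1$, $\alpha=1$ on $(t_{2n},t_{2n+1})$, $\alpha=-1$ on $[t_{2n+1},t_{2n+2}]$. $\{(x_i,v_i)\}$ solves $x_i'=v_i$, $v_i'(t)=\frac1{N-1}\sum_{j\ne i}\alpha(t)\tilde\psi(|x_i(t)-x_j(t)|)(v_j(t)-v_i(t))$, $t>0$, with given initial data in $\mathbb{R}^d$ (continuous, $C^1$ on each $(t_n,t_{n+1})$). $d_V(t):=\max_{i,j}|v_i(t)-v_j(t)|$.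 *)

theory Defs
  imports "HOL-Analysis.Analysis"
begin

definition cs_alpha :: "(nat \<Rightarrow> real) \<Rightarrow> real \<Rightarrow> real" where
  "cs_alpha ts t = (if \<exists>n. ts (2*n+1) \<le> t \<and> t \<le> ts (2*n+2) then -1 else 1)"

definition cs_dV :: "nat \<Rightarrow> (nat \<Rightarrow> real \<Rightarrow> 'a::real_normed_vector) \<Rightarrow> real \<Rightarrow> real" where
  "cs_dV N v t = Max {norm (v i t - v j t) | i j. i \<in> {1..N} \<and> j \<in> {1..N}}"

end

theory Submission
  imports Defs
begin

text \<open>On \<open>[t\<^sub>2\<^sub>n, t\<^sub>2\<^sub>n\<^sub>+\<^sub>1)\<close> the switching sign is \<open>+1\<close>, so for a unit vector \<open>u\<close> the
  projections \<open>f\<^sub>k = \<langle>v\<^sub>k, u\<rangle>\<close> solve a scalar consensus system with weights in \<open>[0, K]\<close>.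
  By the maximum principle every \<open>f\<^sub>k\<close> stays between \<open>m = min f(t\<^sub>2\<^sub>n)\<close> and
  \<open>M = max f(t\<^sub>2\<^sub>n)\<close>, hence \<open>f\<^sub>i' \<le> K (M - f\<^sub>i)\<close> and \<open>f\<^sub>j' \<ge> K (m - f\<^sub>j)\<close>.
  The difference \<open>w = f\<^sub>i - f\<^sub>j\<close> thus satisfies \<open>w' \<le> K (M - m - w)\<close>, and Gronwall's
  argument gives the estimate with \<open>M - m \<le> d\<^sub>V(t\<^sub>2\<^sub>n)\<close>.\<close>

lemma has_real_derivative_inner_left:
  assumes "(f has_vector_derivative f') (at t)"
  shows "((\<lambda>s. inner (f s) u) has_real_derivative inner f' u) (at t)"
  using has_derivative_inner_left[OF assms[unfolded has_vector_derivative_def], of u]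
  by (simp add: has_field_derivative_def mult_commute_abs)

lemma finite_family_max_principle:
  fixes f f' :: "'i \<Rightarrow> real \<Rightarrow> real"
  assumes fin: "finite I"
    and cont: "\<And>k. k \<in> I \<Longrightarrow> continuous_on {a..b} (f k)"
    and der: "\<And>k s. k \<in> I \<Longrightarrow> a < s \<Longrightarrow> s < b \<Longrightarrow> (f k has_real_derivative f' k s) (at s)"
    and at_max: "\<And>k s. k \<in> I \<Longrightarrow> a < s \<Longrightarrow> s < b \<Longrightarrow> (\<And>l. l \<in> I \<Longrightarrow> f l s \<le> f k s) \<Longrightarrow> f' k s \<le> 0"
    and initial: "\<And>l. l \<in> I \<Longrightarrow> f l a \<le> M"
    and k: "k \<in> I" and t: "a \<le> t" "t < b"
  shows "f k t \<le> M"
proof -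
  txt \<open>The first time the tilted barrier \<open>M + e (1 + s - a)\<close> is reached is an interior point;
    there the maximal component would need \<open>f' \<ge> e > 0\<close>, contradicting \<open>at_max\<close>.\<close>
  have perturbed: "f k t \<le> M + e * (1 + t - a)" if e: "e > 0" for e
  proof (rule ccontr)
    assume violated: "\<not> ?thesis"
    define g where "g l s = f l s - M - e * (1 + s - a)" for l s
    define S where "S = (\<Union>l\<in>I. {a..b} \<inter> g l -` {0..})"
    have tS: "t \<in> S" using violated k t unfolding S_def g_def by (auto intro!: bexI[of _ k])
    have "closed S" unfolding S_def g_def
      by (intro closed_UN fin ballI continuous_closed_preimage continuous_intros cont) auto
    moreover have bS: "bdd_below S" unfolding S_def by (auto intro!: bdd_belowI[of _ a])
    ultimately have sS: "Inf S \<in> S" using closed_contains_Inf tS by blast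
    define s where "s = Inf S"
    have "s \<le> t" unfolding s_def using cInf_lower[OF tS bS] .
    from sS obtain k0 where k0: "k0 \<in> I" "g k0 s \<ge> 0" "a \<le> s" unfolding S_def s_def by auto
    have "s \<noteq> a" using initial[OF k0(1)] e k0(2) unfolding g_def by auto
    with k0 \<open>s \<le> t\<close> t have s: "a < s" "s < b" by auto
    obtain km where km: "km \<in> I" "Max ((\<lambda>l. g l s) ` I) = g km s"
      using obtains_MAX[OF fin, of "\<lambda>l. g l s"] k0(1) by blast
    then have km_max: "g l s \<le> g km s" if "l \<in> I" for l
      using Max_ge[of "(\<lambda>l. g l s) ` I"] fin that by force
    then have "f' km s \<le> 0" using at_max[OF km(1) s] km_max unfolding g_def by force
    moreover have "((g km) has_real_derivative (f' km s - e)) (at s)"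
      unfolding g_def[abs_def] by (auto intro!: derivative_eq_intros der[OF km(1) s])
    ultimately obtain d where d: "d > 0" "\<And>h. h > 0 \<Longrightarrow> h < d \<Longrightarrow> g km s < g km (s - h)"
      using DERIV_neg_dec_left e by (metis diff_less_0_iff_less le_less_trans)
    define h where "h = min d (s - a) / 2"
    have h: "h > 0" "h < d" "h \<le> s - a" using d s unfolding h_def by auto
    have "0 \<le> g km s" using km_max[OF k0(1)] k0(2) by simp
    then have "s - h \<in> S" using d(2)[OF h(1,2)] km(1) h s unfolding S_def by (auto intro!: bexI[of _ km])
    then have "s \<le> s - h" unfolding s_def using cInf_lower[OF _ bS] by blast
    then show False using h by simp
  qed
  show ?thesis
  proof (rule field_le_epsilon)
    fix \<epsilon> :: real assume "\<epsilon> > 0"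
    moreover have "\<epsilon> / (1 + t - a) * (1 + t - a) = \<epsilon>" using t by simp
    ultimately show "f k t \<le> M + \<epsilon>"
      using perturbed[of "\<epsilon> / (1 + t - a)"] t by simp
  qed
qed

lemma relaxation_inequality:
  fixes w w' :: "real \<Rightarrow> real"
  assumes ab: "a \<le> b" and cont: "continuous_on {a..b} w"
    and der: "\<And>s. a < s \<Longrightarrow> s < b \<Longrightarrow> (w has_real_derivative w' s) (at s)"
    and rate: "\<And>s. a < s \<Longrightarrow> s < b \<Longrightarrow> w' s \<le> K * (C - w s)"
  shows "w b \<le> exp (- K * (b - a)) * w a + (1 - exp (- K * (b - a))) * C"
proof -
  define h where "h s = exp (K * (s - a)) * (w s - C)" for s
  have "h b \<le> h a"
  proof (rule DERIV_nonpos_imp_decreasing_open[OF ab])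
    fix s assume s: "a < s" "s < b"
    have "(h has_real_derivative exp (K * (s - a)) * (w' s - K * (C - w s))) (at s)"
      unfolding h_def[abs_def]
      by (rule derivative_eq_intros refl der[OF s] | simp add: algebra_simps)+
    moreover have "exp (K * (s - a)) * (w' s - K * (C - w s)) \<le> 0"
      using rate[OF s] by (simp add: mult_nonneg_nonpos)
    ultimately show "\<exists>y. (h has_real_derivative y) (at s) \<and> y \<le> 0" by blast
  next
    show "continuous_on {a..b} h" unfolding h_def by (intro continuous_intros cont)
  qed
  then have "exp (- K * (b - a)) * (exp (K * (b - a)) * (w b - C)) \<le> exp (- K * (b - a)) * (w a - C)"
    unfolding h_def by (intro mult_left_mono) auto
  then have "w b - C \<le> exp (- K * (b - a)) * (w a - C)"
    by (simp add: mult.assoc[symmetric] exp_add[symmetric])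
  then show ?thesis by (simp add: algebra_simps)
qed

definition consensus_solution ::
    "'i set \<Rightarrow> ('i \<Rightarrow> 'i \<Rightarrow> real \<Rightarrow> real) \<Rightarrow> real \<Rightarrow> real \<Rightarrow> ('i \<Rightarrow> real \<Rightarrow> real) \<Rightarrow> bool" where
  "consensus_solution I W a b f \<longleftrightarrow>
     (\<forall>k\<in>I. continuous_on {a..b} (f k)) \<and>
     (\<forall>k\<in>I. \<forall>s\<in>{a<..<b}. (f k has_real_derivative
        (\<Sum>l\<in>I - {k}. W k l s * (f l s - f k s)) / real (card I - 1)) (at s))"

lemma consensus_solution_uminus:
  assumes "consensus_solution I W a b f"
  shows "consensus_solution I W a b (\<lambda>k s. - f k s)"
proof -
  have "(\<Sum>l\<in>I - {k}. W k l s * (- f l s - - f k s)) = - (\<Sum>l\<in>I - {k}. W k l s * (f l s - f k s))"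
    for k s by (simp add: sum_negf[symmetric] algebra_simps)
  then show ?thesis
    using assms unfolding consensus_solution_def
    by (auto intro!: continuous_intros derivative_eq_intros)
qed

lemma consensus_solution_le_initial_bound:
  assumes sol: "consensus_solution I W a b f" and fin: "finite I"
    and W_nonneg: "\<And>k l s. k \<in> I \<Longrightarrow> l \<in> I \<Longrightarrow> a < s \<Longrightarrow> s < b \<Longrightarrow> 0 \<le> W k l s"
    and initial: "\<And>l. l \<in> I \<Longrightarrow> f l a \<le> M"
    and "k \<in> I" "a \<le> t" "t < b"
  shows "f k t \<le> M"
proof -
  define rate where "rate k s = (\<Sum>l\<in>I - {k}. W k l s * (f l s - f k s)) / real (card I - 1)" for k s
  have cont: "continuous_on {a..b} (f k)" if "k \<in> I" for k
    using sol that unfolding consensus_solution_def by blast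
  have der: "(f k has_real_derivative rate k s) (at s)" if "k \<in> I" "a < s" "s < b" for k s
    using sol that unfolding consensus_solution_def rate_def by auto
  have at_max: "rate k s \<le> 0"
    if k: "k \<in> I" and s: "a < s" "s < b" and max: "\<And>l. l \<in> I \<Longrightarrow> f l s \<le> f k s" for k s
    unfolding rate_def using W_nonneg[OF k _ s] max
    by (intro divide_nonpos_nonneg sum_nonpos) (auto intro: mult_nonneg_nonpos)
  show ?thesis
    by (rule finite_family_max_principle[OF fin cont der at_max initial assms(5-7)])
qed

lemma consensus_rate_le:
  fixes y W :: "'i \<Rightarrow> real"
  assumes card: "2 \<le> card I" and k: "k \<in> I"
    and y_le: "\<And>l. l \<in> I \<Longrightarrow> y l \<le> M"
    and W: "\<And>l. l \<in> I - {k} \<Longrightarrow> 0 \<le> W l \<and> W l \<le> K"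
  shows "(\<Sum>l\<in>I - {k}. W l * (y l - y k)) / real (card I - 1) \<le> K * (M - y k)"
proof -
  have "(\<Sum>l\<in>I - {k}. W l * (y l - y k)) \<le> (\<Sum>l\<in>I - {k}. K * (M - y k))"
  proof (rule sum_mono)
    fix l assume l: "l \<in> I - {k}"
    have "W l * (y l - y k) \<le> W l * (M - y k)"
      using W[OF l] y_le l by (intro mult_left_mono) auto
    also have "\<dots> \<le> K * (M - y k)"
      using W[OF l] y_le[OF k] by (intro mult_right_mono) auto
    finally show "W l * (y l - y k) \<le> K * (M - y k)" .
  qed
  also have "\<dots> = real (card I - 1) * (K * (M - y k))"
    using k card by (simp add: card_Diff_singleton)
  finally show ?thesis
    using card by (simp add: divide_le_eq mult.commute)
qed

lemma consensus_solution_diff_relaxation: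
  assumes sol: "consensus_solution I W a b f" and card: "2 \<le> card I"
    and W: "\<And>k l s. k \<in> I \<Longrightarrow> l \<in> I \<Longrightarrow> a < s \<Longrightarrow> s < b \<Longrightarrow> 0 \<le> W k l s \<and> W k l s \<le> K"
    and i: "i \<in> I" and j: "j \<in> I" and t: "a \<le> tb" "tb \<le> t" "t < b"
  shows "f i t - f j t \<le> exp (- K * (t - tb)) * (f i tb - f j tb)
           + (1 - exp (- K * (t - tb))) * (Max ((\<lambda>l. f l a) ` I) - Min ((\<lambda>l. f l a) ` I))"
proof -
  define M where "M = Max ((\<lambda>l. f l a) ` I)"
  define m where "m = Min ((\<lambda>l. f l a) ` I)"
  define rate where "rate k s = (\<Sum>l\<in>I - {k}. W k l s * (f l s - f k s)) / real (card I - 1)" for k s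
  have fin: "finite I" using card by (intro card_ge_0_finite) simp
  have W_nonneg: "0 \<le> W k l s" if "k \<in> I" "l \<in> I" "a < s" "s < b" for k l s
    using W[OF that] by blast
  have below_M: "f l s \<le> M" if "l \<in> I" "a \<le> s" "s < b" for l s
  proof (rule consensus_solution_le_initial_bound[OF sol fin W_nonneg _ that])
    show "f k a \<le> M" if "k \<in> I" for k unfolding M_def using fin that by (intro Max_ge) auto
  qed
  have above_m: "m \<le> f l s" if "l \<in> I" "a \<le> s" "s < b" for l s
  proof -
    have "- f l s \<le> - m"
    proof (rule consensus_solution_le_initial_bound[OF consensus_solution_uminus[OF sol] fin W_nonneg _ that])
      show "- f k a \<le> - m" if "k \<in> I" for k unfolding m_def using fin that by (simp add: Min_le)
    qed
    then show ?thesis by simp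
  qed
  have rate_i: "rate i s \<le> K * (M - f i s)" if "a < s" "s < b" for s
    unfolding rate_def
    by (rule consensus_rate_le[OF card i]) (use below_M W i that in auto)
  have rate_j: "- rate j s \<le> K * (- m - - f j s)" if "a < s" "s < b" for s
  proof -
    have "- rate j s = (\<Sum>l\<in>I - {j}. W j l s * (- f l s - - f j s)) / real (card I - 1)"
      unfolding rate_def minus_divide_left sum_negf[symmetric] by (simp add: algebra_simps)
    also have "\<dots> \<le> K * (- m - - f j s)"
      by (rule consensus_rate_le[OF card j]) (use above_m W j that in auto)
    finally show ?thesis .
  qed
  have "f i t - f j t \<le> exp (- K * (t - tb)) * (f i tb - f j tb) + (1 - exp (- K * (t - tb))) * (M - m)"
  proof (rule relaxation_inequality[OF t(2), where w' = "\<lambda>s. rate i s - rate j s"])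
    show "continuous_on {tb..t} (\<lambda>s. f i s - f j s)"
      using sol i j t unfolding consensus_solution_def
      by (intro continuous_intros) (auto elim!: continuous_on_subset)
    fix s assume "tb < s" "s < t"
    then have s: "a < s" "s < b" using t by auto
    show "((\<lambda>s. f i s - f j s) has_real_derivative rate i s - rate j s) (at s)"
      using sol i j s unfolding consensus_solution_def rate_def by (auto intro!: derivative_intros)
    show "rate i s - rate j s \<le> K * (M - m - (f i s - f j s))"
      using rate_i[OF s] rate_j[OF s] by (simp add: algebra_simps)
  qed
  then show ?thesis unfolding M_def m_def .
qed

lemma cs_alpha_eq_one:
  assumes ts: "strict_mono ts" and s: "ts (2*n) < s" "s < ts (2*n+1)"
  shows "cs_alpha ts s = 1"
proof -
  have "\<not> (ts (2*m+1) \<le> s \<and> s \<le> ts (2*m+2))" for m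
  proof (cases "m < n")
    case True
    then have "ts (2*m+2) \<le> ts (2*n)" using ts by (simp add: strict_mono_less_eq)
    then show ?thesis using s by simp
  next
    case False
    then have "ts (2*n+1) \<le> ts (2*m+1)" using ts by (simp add: strict_mono_less_eq)
    then show ?thesis using s by simp
  qed
  then show ?thesis unfolding cs_alpha_def by auto
qed

lemma Max_minus_Min_inner_le_cs_dV:
  fixes v :: "nat \<Rightarrow> real \<Rightarrow> 'a::real_inner"
  assumes N: "1 \<le> N" and u: "norm u \<le> 1"
  shows "Max ((\<lambda>k. inner (v k a) u) ` {1..N}) - Min ((\<lambda>k. inner (v k a) u) ` {1..N}) \<le> cs_dV N v a"
proof -
  obtain p where p: "p \<in> {1..N}" "Max ((\<lambda>k. inner (v k a) u) ` {1..N}) = inner (v p a) u"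
    using obtains_MAX[of "{1..N}"] N by auto
  obtain q where q: "q \<in> {1..N}" "Min ((\<lambda>k. inner (v k a) u) ` {1..N}) = inner (v q a) u"
    using obtains_MIN[of "{1..N}"] N by auto
  have "inner (v p a) u - inner (v q a) u = inner (v p a - v q a) u" by (simp add: inner_diff_left)
  also have "\<dots> \<le> norm (v p a - v q a) * norm u" by (rule norm_cauchy_schwarz)
  also have "\<dots> \<le> norm (v p a - v q a)" using u by (simp add: mult_left_le)
  also have "\<dots> \<le> cs_dV N v a" unfolding cs_dV_def
  proof (rule Max_ge)
    have "{norm (v i a - v j a) | i j. i \<in> {1..N} \<and> j \<in> {1..N}}
        = (\<lambda>(i, j). norm (v i a - v j a)) ` ({1..N} \<times> {1..N})" by fastforce
    then show "finite {norm (v i a - v j a) | i j. i \<in> {1..N} \<and> j \<in> {1..N}}" by simp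
    show "norm (v p a - v q a) \<in> {norm (v i a - v j a) | i j. i \<in> {1..N} \<and> j \<in> {1..N}}"
      using p q by blast
  qed
  finally show ?thesis using p q by simp
qed

lemma cs_projection_consensus_solution:
  fixes x v :: "nat \<Rightarrow> real \<Rightarrow> 'a::real_inner"
  assumes ts_mono: "strict_mono ts" and ts_nonneg: "0 \<le> ts (2*n)"
    and v_cont: "\<And>i. i \<in> {1..N} \<Longrightarrow> continuous_on {0..} (v i)"
    and v_deriv: "\<And>i n t. i \<in> {1..N} \<Longrightarrow> t \<in> {ts n <..< ts (Suc n)} \<Longrightarrow>
                    (v i has_vector_derivative
                      (1 / real (N - 1)) *\<^sub>R
                        (\<Sum>j\<in>{1..N} - {i}. (cs_alpha ts t * psi (norm (x i t - x j t)))
                                               *\<^sub>R (v j t - v i t))) (at t)"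
  shows "consensus_solution {1..N} (\<lambda>k l s. psi (norm (x k s - x l s))) (ts (2*n)) (ts (2*n+1))
           (\<lambda>k s. inner (v k s) u)"
  unfolding consensus_solution_def
proof safe
  fix k assume k: "k \<in> {1..N}"
  then show "continuous_on {ts (2*n)..ts (2*n+1)} (\<lambda>s. inner (v k s) u)"
    using ts_nonneg by (intro continuous_intros continuous_on_subset[OF v_cont]) auto
  fix s assume "s \<in> {ts (2*n)<..<ts (2*n+1)}"
  then show "((\<lambda>s. inner (v k s) u) has_real_derivative
      (\<Sum>l\<in>{1..N} - {k}. psi (norm (x k s - x l s)) * (inner (v l s) u - inner (v k s) u))
        / real (card {1..N} - 1)) (at s)"
    using has_real_derivative_inner_left[OF v_deriv[OF k, of s "2*n"], of u]
      cs_alpha_eq_one[OF ts_mono, of n s]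
    by (simp add: inner_sum_left inner_diff_left)
qed

theorem proposition7p9:
  fixes N :: nat and psi :: "real \<Rightarrow> real" and K :: real
    and ts :: "nat \<Rightarrow> real"
    and x v :: "nat \<Rightarrow> real \<Rightarrow> 'a::euclidean_space"
  assumes N2: "N \<ge> 2"
    and psi_pos: "\<And>r. psi r > 0"
    and psi_bdd: "bdd_above (range psi)"
    and psi_cont: "continuous_on UNIV psi"
    and K_def: "K = (SUP r. \<bar>psi r\<bar>)"
    and psi_int: "filterlim (\<lambda>X. integral {0..X} (\<lambda>s. Inf (psi ` {0..s}))) at_top at_top"
    and ts_mono: "strict_mono ts"
    and ts_nonneg: "\<And>n. ts n \<ge> 0"
    and ts0: "ts 0 = 0"
    and ts_lim: "filterlim ts at_top sequentially"
    and gap_neg: "\<And>n. ts (2*n+2) - ts (2*n+1) < ln 2 / K"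
    and gap_pos: "\<And>n. ts (2*n+1) - ts (2*n) > 1 / K"
    and sum_cond: "summable (\<lambda>p. ln (exp (K * (ts (2*p+2) - ts (2*p+1)))
                          / (2 - exp (K * (ts (2*p+2) - ts (2*p+1))))))"
    and x_cont: "\<And>i. i \<in> {1..N} \<Longrightarrow> continuous_on {0..} (x i)"
    and v_cont: "\<And>i. i \<in> {1..N} \<Longrightarrow> continuous_on {0..} (v i)"
    and x_deriv: "\<And>i n t. i \<in> {1..N} \<Longrightarrow> t \<in> {ts n <..< ts (Suc n)} \<Longrightarrow>
                    (x i has_vector_derivative v i t) (at t)"
    and v_deriv: "\<And>i n t. i \<in> {1..N} \<Longrightarrow> t \<in> {ts n <..< ts (Suc n)} \<Longrightarrow>
                    (v i has_vector_derivative
                      (1 / real (N - 1)) *\<^sub>R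
                        (\<Sum>j\<in>{1..N} - {i}. (cs_alpha ts t * psi (norm (x i t - x j t)))
                                               *\<^sub>R (v j t - v i t))) (at t)"
  shows "\<forall>i\<in>{1..N}. \<forall>j\<in>{1..N}. \<forall>u. norm u = 1 \<longrightarrow> (\<forall>n t tb.
           ts (2*n) \<le> tb \<and> tb \<le> t \<and> t < ts (2*n+1) \<longrightarrow>
           inner (v i t - v j t) u
             \<le> exp (- K * (t - tb)) * inner (v i tb - v j tb) u
               + (1 - exp (- K * (t - tb))) * cs_dV N v (ts (2*n)))"
proof (intro ballI allI impI)
  fix i j u n t tb
  assume i: "i \<in> {1..N}" and j: "j \<in> {1..N}" and u: "norm (u::'a) = 1"
    and t: "ts (2*n) \<le> tb \<and> tb \<le> t \<and> t < ts (2*n+1)"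
  have "K = (SUP r. psi r)" unfolding K_def using psi_pos by (simp add: abs_of_pos)
  then have psi_le_K: "psi r \<le> K" for r
    using psi_bdd by (simp add: cSUP_upper)
  define f where "f k s = inner (v k s) u" for k s
  have "consensus_solution {1..N} (\<lambda>k l s. psi (norm (x k s - x l s))) (ts (2*n)) (ts (2*n+1)) f"
    unfolding f_def using ts_mono ts_nonneg v_cont v_deriv by (rule cs_projection_consensus_solution)
  then have "f i t - f j t \<le> exp (- K * (t - tb)) * (f i tb - f j tb)
      + (1 - exp (- K * (t - tb))) * (Max ((\<lambda>l. f l (ts (2*n))) ` {1..N}) - Min ((\<lambda>l. f l (ts (2*n))) ` {1..N}))"
    using N2 i j t psi_pos psi_le_K by (intro consensus_solution_diff_relaxation) (auto intro: less_imp_le)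
  also have "\<dots> \<le> exp (- K * (t - tb)) * (f i tb - f j tb) + (1 - exp (- K * (t - tb))) * cs_dV N v (ts (2*n))"
    using Max_minus_Min_inner_le_cs_dV[of N u v] N2 u t psi_le_K[of 0] psi_pos[of 0]
    unfolding f_def by (intro add_left_mono mult_left_mono) auto
  finally show "inner (v i t - v j t) u \<le> exp (- K * (t - tb)) * inner (v i tb - v j tb) u
      + (1 - exp (- K * (t - tb))) * cs_dV N v (ts (2*n))"
    unfolding f_def by (simp add: inner_diff_left)
qed

end
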